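(* Let $G$ be a finite simple undirected graph, $r<s$ positive integers, and run set-k on $(G,r,s)$. For every positive integer $k$ for which the transition time $t_k$ is defined, the $k$-$(r,s)$-nuclei of $G$ are exactly the sets $\mathcal{L}(C)$, where $C$ ranges over the connected components of the supergraph $\mathcal{G}_{t_k}$ and $\mathcal{L}(C)$ is the set of $K_s$s associated with the links of $C$.
   Context: A $K_r$ is an $r$-clique of $G$. For a set $\mathcal{S}$ of $K_s$s: $K_r(\mathcal{S})$ is the set of $K_r$s contained in some member of $\mathcal{S}$; the $\mathcal{S}$-degree of $R\in K_r(\mathcal{S})$ is the number of $S\in\mathcal{S}$ containing $R$; $R,R'$ are $\mathcal{S}$-connected if there is a sequence $R=R_1,\dots,R_m=R'$ in $K_r(\mathcal{S})$ with each $R_i\cup R_{i+1}$ contained in some $S\in\mathcal{S}$. A $k$-$(r,s)$-nucleus is a set $\mathcal{S}$ of $K_s$s, maximal under inclusion among those such that every $R\in K_r(\mathcal{S})$ has $\mathcal{S}$-degree $\ge k$ and any two members of $K_r(\mathcal{S})$ are $\mathcal{S}$-connected. Procedure set-k$(G,r,s)$: enumerate all $K_r$s and $K_s$s; initialize $\delta(R)$ to the number of $K_s$s containing $R$; all $K_r$s unprocessed. Repeat until all processed: pick an unprocessed $K_r$ $R$ with minimum current $\delta(R)$ (ties arbitrary); set $\kappa(R)=\delta(R)$; for each $K_s$ $S\ni R$ such that no $K_r\subset S$ is processed, and for each $K_r$ $R'\subset S$, $R'\neq R$, with $\delta(R')>\delta(R)$, decrease $\delta(R')$ by 1; mark $R$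 processed. $R_i$ is the $i$-th processed $K_r$; "time $t$" is the beginning of the iteration processing $R_t$. The transition time $t_k$ is the unique index with $\kappa(R_{t_k})=k$ and ($t_k=1$ or $\kappa(R_{t_k-1})<k$). $\mathcal{S}_t$ is the set of $K_s$s all of whose $K_r$s are unprocessed at time $t$. The supergraph $\mathcal{G}_t$ is the multigraph with node set $K_r(\mathcal{S}_t)$ in which, for each $S\in\mathcal{S}_t$ and each pair of distinct $K_r$s $R,R'\subset S$, there is a link between $R$ and $R'$ associated with $S$ (so there may be multiple links between two nodes). *)

theory Defs
  imports Main
begin

definition cliques :: "'a set \<Rightarrow> ('a \<Rightarrow> 'a \<Rightarrow> bool) \<Rightarrow> nat \<Rightarrow> 'a set set" where
  "cliques V E r = {K. K \<subseteq> V \<and> card K = r \<and> (\<forall>x\<in>K. \<forall>y\<in>K. x \<noteq> y \<longrightarrow> E x y)}"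

definition Kr_of :: "'a set \<Rightarrow> ('a \<Rightarrow> 'a \<Rightarrow> bool) \<Rightarrow> nat \<Rightarrow> 'a set set \<Rightarrow> 'a set set" where
  "Kr_of V E r SS = {R \<in> cliques V E r. \<exists>S\<in>SS. R \<subseteq> S}"

definition sdeg :: "'a set set \<Rightarrow> 'a set \<Rightarrow> nat" where
  "sdeg SS R = card {S \<in> SS. R \<subseteq> S}"

definition s_step :: "'a set \<Rightarrow> ('a \<Rightarrow> 'a \<Rightarrow> bool) \<Rightarrow> nat \<Rightarrow> 'a set set \<Rightarrow> ('a set \<times> 'a set) set" where
  "s_step V E r SS = {(R, R'). R \<in> Kr_of V E r SS \<and> R' \<in> Kr_of V E r SS \<and> (\<exists>S\<in>SS. R \<union> R' \<subseteq> S)}"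

definition s_connected :: "'a set \<Rightarrow> ('a \<Rightarrow> 'a \<Rightarrow> bool) \<Rightarrow> nat \<Rightarrow> 'a set set \<Rightarrow> 'a set \<Rightarrow> 'a set \<Rightarrow> bool" where
  "s_connected V E r SS R R' \<longleftrightarrow> R \<in> Kr_of V E r SS \<and> (R, R') \<in> (s_step V E r SS)\<^sup>*"

definition nucleus_cond :: "'a set \<Rightarrow> ('a \<Rightarrow> 'a \<Rightarrow> bool) \<Rightarrow> nat \<Rightarrow> nat \<Rightarrow> nat \<Rightarrow> 'a set set \<Rightarrow> bool" where
  "nucleus_cond V E r s k SS \<longleftrightarrow>
     SS \<subseteq> cliques V E s \<and>
     (\<forall>R\<in>Kr_of V E r SS. sdeg SS R \<ge> k) \<and>
     (\<forall>R\<in>Kr_of V E r SS. \<forall>R'\<in>Kr_of V E r SS. s_connected V E r SS R R')"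

definition is_nucleus :: "'a set \<Rightarrow> ('a \<Rightarrow> 'a \<Rightarrow> bool) \<Rightarrow> nat \<Rightarrow> nat \<Rightarrow> nat \<Rightarrow> 'a set set \<Rightarrow> bool" where
  "is_nucleus V E r s k SS \<longleftrightarrow> nucleus_cond V E r s k SS \<and>
     (\<forall>SS'. nucleus_cond V E r s k SS' \<and> SS \<subseteq> SS' \<longrightarrow> SS' = SS)"

definition alive :: "'a set \<Rightarrow> ('a \<Rightarrow> 'a \<Rightarrow> bool) \<Rightarrow> nat \<Rightarrow> nat \<Rightarrow> 'a set set \<Rightarrow> 'a set set" where
  "alive V E r s P = {S \<in> cliques V E s. \<forall>Q\<in>cliques V E r. Q \<subseteq> S \<longrightarrow> Q \<notin> P}"

definition deg0 :: "'a set \<Rightarrow> ('a \<Rightarrow> 'a \<Rightarrow> bool) \<Rightarrow> nat \<Rightarrow> 'a set \<Rightarrow> nat" where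
  "deg0 V E s R = card {S \<in> cliques V E s. R \<subseteq> S}"

text \<open>For each surviving K_s S containing R and each R' in S, R' different from R, delta(R') is
  decreased by one while it exceeds delta(R); sequential decrements give
  max (delta R) (delta R' - c), where c counts those S containing R and R'.\<close>
definition dstep :: "'a set \<Rightarrow> ('a \<Rightarrow> 'a \<Rightarrow> bool) \<Rightarrow> nat \<Rightarrow> nat \<Rightarrow> 'a set set \<Rightarrow> 'a set
                     \<Rightarrow> ('a set \<Rightarrow> nat) \<Rightarrow> ('a set \<Rightarrow> nat)" where
  "dstep V E r s P R \<delta> = (\<lambda>R'.
     if R' \<in> cliques V E r \<and> R' \<noteq> R \<and> \<delta> R' > \<delta> R
     then max (\<delta> R) (\<delta> R' - card {S \<in> alive V E r s P. R \<subseteq> S \<and> R' \<subseteq> S})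
     else \<delta> R')"

text \<open>delta at (0-indexed) time i of a run processing the K_r's in the order ord:
  the first i elements of ord have been processed.\<close>
primrec delta_at :: "'a set \<Rightarrow> ('a \<Rightarrow> 'a \<Rightarrow> bool) \<Rightarrow> nat \<Rightarrow> nat \<Rightarrow> 'a set list \<Rightarrow> nat
                     \<Rightarrow> ('a set \<Rightarrow> nat)" where
  "delta_at V E r s ord 0 = deg0 V E s"
| "delta_at V E r s ord (Suc i) =
     dstep V E r s (set (take i ord)) (ord ! i) (delta_at V E r s ord i)"

text \<open>ord is a possible processing order of set-k (ties broken arbitrarily).\<close>
definition valid_run :: "'a set \<Rightarrow> ('a \<Rightarrow> 'a \<Rightarrow> bool) \<Rightarrow> nat \<Rightarrow> nat \<Rightarrow> 'a set list \<Rightarrow> bool" where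
  "valid_run V E r s ord \<longleftrightarrow> distinct ord \<and> set ord = cliques V E r \<and>
     (\<forall>i < length ord. \<forall>R \<in> cliques V E r - set (take i ord).
        delta_at V E r s ord i (ord ! i) \<le> delta_at V E r s ord i R)"

text \<open>kappa of the (i+1)-th processed K_r (0-indexed i).\<close>
definition kappa :: "'a set \<Rightarrow> ('a \<Rightarrow> 'a \<Rightarrow> bool) \<Rightarrow> nat \<Rightarrow> nat \<Rightarrow> 'a set list \<Rightarrow> nat \<Rightarrow> nat" where
  "kappa V E r s ord i = delta_at V E r s ord i (ord ! i)"

definition sg_adj :: "'a set \<Rightarrow> ('a \<Rightarrow> 'a \<Rightarrow> bool) \<Rightarrow> nat \<Rightarrow> nat \<Rightarrow> 'a set set \<Rightarrow> ('a set \<times> 'a set) set" where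
  "sg_adj V E r s P = {(R, R'). R \<noteq> R' \<and> R \<in> cliques V E r \<and> R' \<in> cliques V E r \<and>
                         (\<exists>S\<in>alive V E r s P. R \<subseteq> S \<and> R' \<subseteq> S)}"

definition sg_components :: "'a set \<Rightarrow> ('a \<Rightarrow> 'a \<Rightarrow> bool) \<Rightarrow> nat \<Rightarrow> nat \<Rightarrow> 'a set set \<Rightarrow> 'a set set set" where
  "sg_components V E r s P =
     {{R'. (R, R') \<in> (sg_adj V E r s P)\<^sup>*} | R. R \<in> Kr_of V E r (alive V E r s P)}"

definition links_of :: "'a set \<Rightarrow> ('a \<Rightarrow> 'a \<Rightarrow> bool) \<Rightarrow> nat \<Rightarrow> nat \<Rightarrow> 'a set set \<Rightarrow> 'a set set \<Rightarrow> 'a set set" where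
  "links_of V E r s P C = {S \<in> alive V E r s P. \<exists>R\<in>C. \<exists>R'\<in>C. R \<noteq> R' \<and>
       R \<in> cliques V E r \<and> R' \<in> cliques V E r \<and> R \<subseteq> S \<and> R' \<subseteq> S}"

end

theory Submission
  imports Defs
begin

text \<open>As long as set-k has not reached level k, the value delta(R) of every
  unprocessed K_r R equals the maximum of the last kappa and the number of still-alive K_s's
  containing R. Hence at the transition time t_k every alive K_r lies in at least k alive K_s's,
  so the links of each component of the supergraph form a connected family of K_s's of degree
  at least k. Conversely, a family satisfying the nucleus condition contains no processed K_r:
  the first of its K_r's to be processed would get kappa at least its degree, hence at least k,
  before t_k. Being connected, such a family then lies inside the links of a single component,
  and maximality identifies the nuclei with these link sets.\<close>

lemma nth_notin_set_take:
  assumes "distinct xs" and "i < length xs"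
  shows "xs ! i \<notin> set (take i xs)"
proof
  assume "xs ! i \<in> set (take i xs)"
  then obtain j where "j < i" and "xs ! j = xs ! i"
    by (auto simp: in_set_conv_nth)
  with assms show False by (simp add: nth_eq_iff_index_eq)
qed

locale clique_hypergraph =
  fixes V :: "'a set" and E :: "'a \<Rightarrow> 'a \<Rightarrow> bool" and r s :: nat
  assumes finite_V: "finite V" and r_pos: "0 < r" and r_less_s: "r < s"
begin

lemma finite_cliques: "finite (cliques V E n)"
  by (rule finite_subset[of _ "Pow V"]) (auto simp: cliques_def finite_V)

lemma finite_alive: "finite (alive V E r s P)"
  by (rule finite_subset[OF _ finite_cliques[of s]]) (auto simp: alive_def)

lemma Kr_of_alive_subset: "Kr_of V E r (alive V E r s P) \<subseteq> cliques V E r - P"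
  by (auto simp: Kr_of_def alive_def)

lemma subset_clique_in_cliques:
  "Q \<subseteq> S \<Longrightarrow> S \<in> cliques V E n \<Longrightarrow> card Q = m \<Longrightarrow> Q \<in> cliques V E m"
  by (auto simp: cliques_def)

lemma ex_sub_r_clique:
  assumes "S \<in> cliques V E s"
  obtains Q where "Q \<in> cliques V E r" and "Q \<subseteq> S"
proof -
  have "r \<le> card S" using assms r_less_s by (simp add: cliques_def)
  then obtain Q where "Q \<subseteq> S" and "card Q = r" by (rule obtain_subset_with_card_n)
  with assms subset_clique_in_cliques that show ?thesis by blast
qed

text \<open>Since r < s, swapping one vertex of Q for a vertex of S outside Q gives another K_r
  in S; so every K_r of an alive K_s is the endpoint of a link of the supergraph.\<close>

lemma ex_other_sub_r_clique:
  assumes S: "S \<in> cliques V E s" and Q: "Q \<in> cliques V E r" and "Q \<subseteq> S"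
  obtains Q' where "Q' \<in> cliques V E r" and "Q' \<subseteq> S" and "Q' \<noteq> Q"
proof -
  have "finite S" using S finite_V by (auto simp: cliques_def intro: finite_subset)
  then have "finite Q" using \<open>Q \<subseteq> S\<close> finite_subset by blast
  have "card Q = r" and "card S = s" using Q S by (auto simp: cliques_def)
  then have "Q \<noteq> S" using r_less_s by auto
  then obtain x where x: "x \<in> S" "x \<notin> Q" using \<open>Q \<subseteq> S\<close> by blast
  obtain y where y: "y \<in> Q" using \<open>card Q = r\<close> r_pos by fastforce
  define Q' where "Q' = insert x (Q - {y})"
  have "Q' \<subseteq> S" using \<open>Q \<subseteq> S\<close> x y by (auto simp: Q'_def)
  moreover have "card Q' = r"
    using \<open>finite Q\<close> \<open>card Q = r\<close> x y r_pos by (simp add: Q'_def card_Diff_singleton)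
  ultimately have "Q' \<in> cliques V E r" using S subset_clique_in_cliques by blast
  moreover have "Q' \<noteq> Q" using x by (auto simp: Q'_def)
  ultimately show ?thesis using that \<open>Q' \<subseteq> S\<close> by blast
qed

section \<open>Components of the supergraph\<close>

definition sg_component :: "'a set set \<Rightarrow> 'a set \<Rightarrow> 'a set set" where
  "sg_component P R = (sg_adj V E r s P)\<^sup>* `` {R}"

lemma sg_components_eq:
  "sg_components V E r s P = sg_component P ` Kr_of V E r (alive V E r s P)"
  by (auto simp: sg_components_def sg_component_def)

lemma sym_sg_adj: "sym (sg_adj V E r s P)"
  by (auto simp: sym_def sg_adj_def)

lemma sg_component_sym: "Q \<in> sg_component P R \<Longrightarrow> R \<in> sg_component P Q"
  using sym_rtrancl[OF sym_sg_adj] by (auto simp: sg_component_def dest: symD)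

lemma sg_component_trans:
  "Q \<in> sg_component P R \<Longrightarrow> Q' \<in> sg_component P Q \<Longrightarrow> Q' \<in> sg_component P R"
  by (auto simp: sg_component_def)

lemma sg_component_step:
  "Q \<in> sg_component P R \<Longrightarrow> (Q, Q') \<in> sg_adj V E r s P \<Longrightarrow> Q' \<in> sg_component P R"
  by (auto simp: sg_component_def)

lemma sg_component_subset_Kr_of:
  assumes "R \<in> Kr_of V E r (alive V E r s P)"
  shows "sg_component P R \<subseteq> Kr_of V E r (alive V E r s P)"
proof
  fix Q assume "Q \<in> sg_component P R"
  then have "(R, Q) \<in> (sg_adj V E r s P)\<^sup>*" by (simp add: sg_component_def)
  then show "Q \<in> Kr_of V E r (alive V E r s P)"
    by induction (use assms in \<open>auto simp: sg_adj_def Kr_of_def\<close>)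
qed

lemma links_of_subset_alive: "links_of V E r s P C \<subseteq> alive V E r s P"
  by (auto simp: links_of_def)

lemma alive_in_links_of_sg_component:
  assumes S: "S \<in> alive V E r s P" and Q: "Q \<in> sg_component P R" "Q \<in> cliques V E r" "Q \<subseteq> S"
  shows "S \<in> links_of V E r s P (sg_component P R)"
proof -
  have "S \<in> cliques V E s" using S by (simp add: alive_def)
  then obtain Q' where Q': "Q' \<in> cliques V E r" "Q' \<subseteq> S" "Q' \<noteq> Q"
    using ex_other_sub_r_clique Q by metis
  then have "(Q, Q') \<in> sg_adj V E r s P" using Q S by (auto simp: sg_adj_def)
  then have "Q' \<in> sg_component P R" using Q sg_component_step by blast
  with Q Q' S show ?thesis unfolding links_of_def by blast
qed

lemma Kr_of_links_of_sg_component: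
  assumes R: "R \<in> Kr_of V E r (alive V E r s P)"
  shows "Kr_of V E r (links_of V E r s P (sg_component P R)) = sg_component P R"
proof
  show "Kr_of V E r (links_of V E r s P (sg_component P R)) \<subseteq> sg_component P R"
  proof
    fix Q assume "Q \<in> Kr_of V E r (links_of V E r s P (sg_component P R))"
    then obtain S R1 where "Q \<in> cliques V E r" "Q \<subseteq> S" "S \<in> alive V E r s P"
        and R1: "R1 \<in> sg_component P R" "R1 \<subseteq> S" "R1 \<in> cliques V E r"
      by (auto simp: Kr_of_def links_of_def)
    then have "Q = R1 \<or> (R1, Q) \<in> sg_adj V E r s P" by (auto simp: sg_adj_def)
    with R1 show "Q \<in> sg_component P R" using sg_component_step by blast
  qed
  show "sg_component P R \<subseteq> Kr_of V E r (links_of V E r s P (sg_component P R))"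
  proof
    fix Q assume Q: "Q \<in> sg_component P R"
    then obtain S where "S \<in> alive V E r s P" "Q \<subseteq> S" "Q \<in> cliques V E r"
      using sg_component_subset_Kr_of[OF R] by (auto simp: Kr_of_def)
    with Q show "Q \<in> Kr_of V E r (links_of V E r s P (sg_component P R))"
      using alive_in_links_of_sg_component by (auto simp: Kr_of_def)
  qed
qed

lemma s_step_links_of_sg_component:
  assumes R: "R \<in> Kr_of V E r (alive V E r s P)"
    and "(Q, Q') \<in> sg_adj V E r s P" and "Q \<in> sg_component P R"
  shows "(Q, Q') \<in> s_step V E r (links_of V E r s P (sg_component P R))"
proof -
  obtain S where S: "S \<in> alive V E r s P" "Q \<subseteq> S" "Q' \<subseteq> S"
      and cl: "Q \<in> cliques V E r" "Q' \<in> cliques V E r"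
    using assms(2) by (auto simp: sg_adj_def)
  have "S \<in> links_of V E r s P (sg_component P R)"
    using alive_in_links_of_sg_component[OF S(1) \<open>Q \<in> sg_component P R\<close> cl(1) S(2)] .
  with S cl show ?thesis by (auto simp: s_step_def Kr_of_def)
qed

lemma nucleus_cond_links_of_sg_component:
  assumes deg: "\<forall>Q\<in>Kr_of V E r (alive V E r s P). k \<le> sdeg (alive V E r s P) Q"
    and R: "R \<in> Kr_of V E r (alive V E r s P)"
  shows "nucleus_cond V E r s k (links_of V E r s P (sg_component P R))"
proof -
  let ?L = "links_of V E r s P (sg_component P R)"
  have "k \<le> sdeg ?L Q" if "Q \<in> Kr_of V E r ?L" for Q
  proof -
    have Q: "Q \<in> sg_component P R" using that Kr_of_links_of_sg_component[OF R] by simp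
    then have QA: "Q \<in> Kr_of V E r (alive V E r s P)" using sg_component_subset_Kr_of[OF R] by blast
    have "Q \<in> cliques V E r" using QA by (simp add: Kr_of_def)
    then have "{S \<in> ?L. Q \<subseteq> S} = {S \<in> alive V E r s P. Q \<subseteq> S}"
      using Q alive_in_links_of_sg_component links_of_subset_alive by blast
    then show ?thesis using deg QA by (simp add: sdeg_def)
  qed
  moreover have "s_connected V E r ?L Q Q'"
    if "Q \<in> Kr_of V E r ?L" and "Q' \<in> Kr_of V E r ?L" for Q Q'
  proof -
    have Q: "Q \<in> sg_component P R" and "Q' \<in> sg_component P Q"
      using that Kr_of_links_of_sg_component[OF R] sg_component_sym sg_component_trans by blast+
    then have "(Q, Q') \<in> (sg_adj V E r s P)\<^sup>*" by (simp add: sg_component_def)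
    then have "(Q, Q') \<in> (s_step V E r ?L)\<^sup>*"
    proof induction
      case (step Q1 Q2)
      have "Q1 \<in> sg_component P R" using step(1) Q by (auto simp: sg_component_def)
      then show ?case
        using step s_step_links_of_sg_component[OF R] rtrancl_into_rtrancl by metis
    qed simp
    with that show ?thesis by (simp add: s_connected_def)
  qed
  moreover have "?L \<subseteq> cliques V E s" by (auto simp: links_of_def alive_def)
  ultimately show ?thesis by (auto simp: nucleus_cond_def)
qed

text \<open>Each connecting step of SS is a link of the supergraph or trivial.\<close>

lemma nucleus_cond_subset_links_of_sg_component:
  assumes nc: "nucleus_cond V E r s k SS" and SS: "SS \<subseteq> alive V E r s P"
    and R: "R \<in> Kr_of V E r SS"
  shows "SS \<subseteq> links_of V E r s P (sg_component P R)"
proof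
  fix S assume S: "S \<in> SS"
  then obtain Q where Q: "Q \<in> cliques V E r" "Q \<subseteq> S"
    using nc ex_sub_r_clique by (auto simp: nucleus_cond_def)
  then have "Q \<in> Kr_of V E r SS" using S by (auto simp: Kr_of_def)
  then have "(R, Q) \<in> (s_step V E r SS)\<^sup>*"
    using nc R unfolding nucleus_cond_def s_connected_def by blast
  moreover have "s_step V E r SS \<subseteq> (sg_adj V E r s P)\<^sup>="
    using SS by (auto simp: s_step_def sg_adj_def Kr_of_def)
  ultimately have "(R, Q) \<in> ((sg_adj V E r s P)\<^sup>=)\<^sup>*" using rtrancl_mono by blast
  then have "Q \<in> sg_component P R" by (simp add: sg_component_def)
  then show "S \<in> links_of V E r s P (sg_component P R)"
    using alive_in_links_of_sg_component S SS Q by blast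
qed

theorem nuclei_eq_links_of_sg_components:
  assumes deg: "\<forall>Q\<in>Kr_of V E r (alive V E r s P). k \<le> sdeg (alive V E r s P) Q"
    and inside: "\<And>SS. nucleus_cond V E r s k SS \<Longrightarrow> SS \<subseteq> alive V E r s P"
    and nonempty: "Kr_of V E r (alive V E r s P) \<noteq> {}"
  shows "{SS. is_nucleus V E r s k SS} = links_of V E r s P ` sg_components V E r s P"
proof -
  let ?L = "\<lambda>R. links_of V E r s P (sg_component P R)"
  have absorb: "R \<in> Kr_of V E r (alive V E r s P) \<and> SS \<subseteq> ?L R"
    if "nucleus_cond V E r s k SS" and "R \<in> Kr_of V E r SS" for SS R
    using that inside[OF that(1)] nucleus_cond_subset_links_of_sg_component
    by (auto simp: Kr_of_def)
  have "is_nucleus V E r s k (?L R)" if R: "R \<in> Kr_of V E r (alive V E r s P)" for R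
  proof -
    have "R \<in> Kr_of V E r (?L R)"
      using Kr_of_links_of_sg_component[OF R] by (simp add: sg_component_def)
    then have "SS = ?L R" if "nucleus_cond V E r s k SS" and "?L R \<subseteq> SS" for SS
      using that absorb[of SS R] by (auto simp: Kr_of_def)
    then show ?thesis
      using nucleus_cond_links_of_sg_component[OF deg R] by (auto simp: is_nucleus_def)
  qed
  moreover have "\<exists>R\<in>Kr_of V E r (alive V E r s P). SS = ?L R" if "is_nucleus V E r s k SS" for SS
  proof -
    have nc: "nucleus_cond V E r s k SS"
      and max: "\<And>SS'. nucleus_cond V E r s k SS' \<Longrightarrow> SS \<subseteq> SS' \<Longrightarrow> SS' = SS"
      using that by (auto simp: is_nucleus_def)
    obtain R where R: "R \<in> Kr_of V E r (alive V E r s P)" and "SS \<subseteq> ?L R"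
    proof (cases "SS = {}")
      case True
      with nonempty that show ?thesis by blast
    next
      case False
      then obtain S Q where "S \<in> SS" "Q \<in> cliques V E r" "Q \<subseteq> S"
        using nc ex_sub_r_clique by (force simp: nucleus_cond_def)
      then have "Q \<in> Kr_of V E r SS" by (auto simp: Kr_of_def)
      with absorb nc that show ?thesis by blast
    qed
    then show ?thesis using max nucleus_cond_links_of_sg_component[OF deg R] by metis
  qed
  ultimately show ?thesis unfolding sg_components_eq image_image by blast
qed

end

section \<open>The invariant of set-k\<close>

locale setk_run = clique_hypergraph +
  fixes ord :: "'a set list"
  assumes valid: "valid_run V E r s ord"
begin

abbreviation processed :: "nat \<Rightarrow> 'a set set" where
  "processed i \<equiv> set (take i ord)"

definition kappa_prev :: "nat \<Rightarrow> nat" where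
  "kappa_prev i = (if i = 0 then 0 else kappa V E r s ord (i - 1))"

lemma distinct_ord: "distinct ord" and set_ord: "set ord = cliques V E r"
  using valid by (auto simp: valid_run_def)

lemma ord_nth_unprocessed: "i < length ord \<Longrightarrow> ord ! i \<in> cliques V E r - processed i"
  using set_ord nth_mem nth_notin_set_take[OF distinct_ord] by blast

lemma delta_at_ge_kappa:
  "i < length ord \<Longrightarrow> R \<in> cliques V E r - processed i \<Longrightarrow>
    kappa V E r s ord i \<le> delta_at V E r s ord i R"
  using valid by (auto simp: valid_run_def kappa_def)

lemma alive_insert:
  "R \<in> cliques V E r \<Longrightarrow> alive V E r s (insert R P) = {S \<in> alive V E r s P. \<not> R \<subseteq> S}"
  by (auto simp: alive_def)

text \<open>Processing R0 makes delta(R0) the new floor, and each K_s through R0 and R that dies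
  lowers delta(R) by one unless it has already reached that floor.\<close>

lemma delta_at_unprocessed:
  "i \<le> length ord \<Longrightarrow> R \<in> cliques V E r - processed i \<Longrightarrow>
    delta_at V E r s ord i R = max (kappa_prev i) (sdeg (alive V E r s (processed i)) R)"
proof (induction i arbitrary: R)
  case 0
  then show ?case by (simp add: deg0_def sdeg_def alive_def kappa_prev_def)
next
  case (Suc i)
  let ?\<delta> = "delta_at V E r s ord i" and ?A = "alive V E r s (processed i)"
  define R0 where "R0 = ord ! i"
  have i: "i < length ord" using Suc.prems by simp
  have R0: "R0 \<in> cliques V E r - processed i" using ord_nth_unprocessed[OF i] by (simp add: R0_def)
  have processed_Suc: "processed (Suc i) = insert R0 (processed i)"
    using i by (simp add: take_Suc_conv_app_nth R0_def)
  have R: "R \<in> cliques V E r - processed i" "R \<noteq> R0" using Suc.prems processed_Suc by auto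
  have IH: "?\<delta> Q = max (kappa_prev i) (sdeg ?A Q)" if "Q \<in> cliques V E r - processed i" for Q
    using Suc.IH i that by simp
  have kappa_i: "kappa_prev (Suc i) = ?\<delta> R0" by (simp add: kappa_prev_def kappa_def R0_def)
  define c where "c = card {S \<in> ?A. R0 \<subseteq> S \<and> R \<subseteq> S}"
  have "{S \<in> alive V E r s (processed (Suc i)). R \<subseteq> S} =
        {S \<in> ?A. R \<subseteq> S} - {S \<in> ?A. R0 \<subseteq> S \<and> R \<subseteq> S}"
    using R0 processed_Suc alive_insert by auto
  then have sdeg_Suc: "sdeg (alive V E r s (processed (Suc i))) R = sdeg ?A R - c"
    unfolding sdeg_def c_def
    by (metis (no_types, lifting) card_Diff_subset finite_alive finite_subset mem_Collect_eq subsetI)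
  have "?\<delta> R0 \<le> ?\<delta> R" using delta_at_ge_kappa[OF i R(1)] by (simp add: kappa_def R0_def)
  moreover have "kappa_prev i \<le> ?\<delta> R0" using IH[OF R0] by simp
  moreover have "delta_at V E r s ord (Suc i) R =
      (if ?\<delta> R0 < ?\<delta> R then max (?\<delta> R0) (?\<delta> R - c) else ?\<delta> R)"
    using R by (simp add: dstep_def c_def R0_def)
  ultimately show ?case
    using kappa_i sdeg_Suc IH[OF R(1)] by (auto simp: max_def)
qed

lemma kappa_Suc_ge:
  assumes "Suc i < length ord"
  shows "kappa V E r s ord i \<le> kappa V E r s ord (Suc i)"
proof -
  have "kappa V E r s ord (Suc i) =
      max (kappa_prev (Suc i)) (sdeg (alive V E r s (processed (Suc i))) (ord ! Suc i))"
    using delta_at_unprocessed[OF _ ord_nth_unprocessed[OF assms]] assms by (simp add: kappa_def)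
  then show ?thesis by (simp add: kappa_prev_def)
qed

lemma kappa_mono: "i \<le> j \<Longrightarrow> j < length ord \<Longrightarrow> kappa V E r s ord i \<le> kappa V E r s ord j"
  by (induction j rule: dec_induct) (auto intro: order_trans kappa_Suc_ge)

section \<open>The transition time\<close>

context
  fixes k t :: nat
  assumes t_less: "t < length ord" and kappa_t: "kappa V E r s ord t = k"
    and before_t: "t = 0 \<or> kappa V E r s ord (t - 1) < k"
begin

lemma kappa_less_before_transition: "i < t \<Longrightarrow> kappa V E r s ord i < k"
  using before_t kappa_mono[of i "t - 1"] t_less by fastforce

lemma sdeg_alive_at_transition:
  assumes "R \<in> cliques V E r - processed t"
  shows "k \<le> sdeg (alive V E r s (processed t)) R"
proof -
  have "k \<le> delta_at V E r s ord t R" using delta_at_ge_kappa[OF t_less assms] kappa_t by simp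
  moreover have "kappa_prev t = 0 \<or> kappa_prev t < k" using before_t by (auto simp: kappa_prev_def)
  ultimately show ?thesis using delta_at_unprocessed[OF _ assms] t_less by auto
qed

lemma Kr_of_alive_at_transition_nonempty:
  assumes "0 < k"
  shows "Kr_of V E r (alive V E r s (processed t)) \<noteq> {}"
proof -
  have R: "ord ! t \<in> cliques V E r - processed t" using ord_nth_unprocessed[OF t_less] .
  then have "0 < card {S \<in> alive V E r s (processed t). ord ! t \<subseteq> S}"
    using sdeg_alive_at_transition[OF R] assms by (simp add: sdeg_def)
  then obtain S where "S \<in> alive V E r s (processed t)" "ord ! t \<subseteq> S"
    by (auto simp: card_gt_0_iff)
  with R show ?thesis by (auto simp: Kr_of_def)
qed

text \<open>The first K_r of SS to be processed, at time i, still sees all of SS alive, so kappa at i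
  is at least k; hence i is not before t.\<close>

lemma nucleus_cond_subset_alive_at_transition:
  assumes nc: "nucleus_cond V E r s k SS"
  shows "SS \<subseteq> alive V E r s (processed t)"
proof (rule ccontr)
  assume "\<not> SS \<subseteq> alive V E r s (processed t)"
  then obtain Q where "Q \<in> Kr_of V E r SS" "Q \<in> processed t"
    using nc by (auto simp: alive_def Kr_of_def nucleus_cond_def)
  then obtain j where j: "j < t" "ord ! j \<in> Kr_of V E r SS"
    using t_less by (auto simp: in_set_conv_nth)
  define i where "i = (LEAST i. ord ! i \<in> Kr_of V E r SS)"
  have "ord ! i \<in> Kr_of V E r SS" and "i \<le> j"
    unfolding i_def using j(2) by (auto intro: LeastI Least_le)
  then have i: "i < t" "i < length ord" using j t_less by auto
  have "processed i \<inter> Kr_of V E r SS = {}"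
    unfolding i_def using not_less_Least by (fastforce simp: in_set_conv_nth)
  then have "SS \<subseteq> alive V E r s (processed i)"
    using nc by (auto simp: alive_def Kr_of_def nucleus_cond_def)
  then have "sdeg SS (ord ! i) \<le> sdeg (alive V E r s (processed i)) (ord ! i)"
    unfolding sdeg_def by (intro card_mono[OF finite_subset[OF _ finite_alive]]) auto
  also have "\<dots> \<le> kappa V E r s ord i"
    using delta_at_unprocessed[OF _ ord_nth_unprocessed] i by (simp add: kappa_def)
  finally show False
    using nc \<open>ord ! i \<in> Kr_of V E r SS\<close> kappa_less_before_transition[OF i(1)]
    by (fastforce simp: nucleus_cond_def)
qed

end

end

theorem lemma2:
  fixes V :: "'a set" and E :: "'a \<Rightarrow> 'a \<Rightarrow> bool"
    and r s k t :: nat and ord :: "'a set list"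
  assumes "finite V"
    and "\<And>x y. E x y \<Longrightarrow> E y x"
    and "\<And>x. \<not> E x x"
    and "0 < r" and "r < s"
    and "valid_run V E r s ord"
    and "0 < k"
    and "t < length ord"
    and "kappa V E r s ord t = k"
    and "t = 0 \<or> kappa V E r s ord (t - 1) < k"
  shows "{SS. is_nucleus V E r s k SS} =
         links_of V E r s (set (take t ord)) ` sg_components V E r s (set (take t ord))"
proof -
  interpret setk_run V E r s ord
    using assms by unfold_locales
  show ?thesis
  proof (rule nuclei_eq_links_of_sg_components)
    show "\<forall>Q\<in>Kr_of V E r (alive V E r s (processed t)). k \<le> sdeg (alive V E r s (processed t)) Q"
      using assms sdeg_alive_at_transition Kr_of_alive_subset by blast
    show "\<And>SS. nucleus_cond V E r s k SS \<Longrightarrow> SS \<subseteq> alive V E r s (processed t)"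
      using assms nucleus_cond_subset_alive_at_transition by blast
    show "Kr_of V E r (alive V E r s (processed t)) \<noteq> {}"
      using assms Kr_of_alive_at_transition_nonempty by blast
  qed
qed

end
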